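(* Let $R$ be a commutative ring with identity and $I$ an ideal of $R$. Then the amalgamated duplication $R\bowtie I$ is a pm-ring if and only if $R$ is a pm-ring.
   Context: $R\bowtie I:=\{(r,r+i)\mid r\in R,\ i\in I\}$, a subring of $R\times R$. A commutative ring is a pm-ring if every prime ideal is contained in a unique maximal ideal. *)

theory Defs
  imports "HOL-Algebra.Algebra"
begin

definition amalg_dup :: "('a, 'm) ring_scheme \<Rightarrow> 'a set \<Rightarrow> ('a \<times> 'a) ring" where
  "amalg_dup R I = (RDirProd R R)
     \<lparr>carrier := {(r, r \<oplus>\<^bsub>R\<^esub> i) | r i. r \<in> carrier R \<and> i \<in> I}\<rparr>"

definition pm_ring :: "('a, 'm) ring_scheme \<Rightarrow> bool" where
  "pm_ring R \<longleftrightarrow> (\<forall>P. primeideal P R \<longrightarrow> (\<exists>!M. maximalideal M R \<and> P \<subseteq> M))"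

end

theory Submission
  imports Defs
begin

text \<open>A prime ideal of \<open>R \<bowtie> I\<close> contains the kernel of one of the two projections onto \<open>R\<close>,
  because these kernels multiply to zero. Each projection is a surjective ring homomorphism,
  and along a surjective homomorphism the maximal ideals above an ideal containing the kernel
  correspond bijectively to the maximal ideals above its image. Hence uniqueness of the maximal
  ideal above a prime transfers in both directions between \<open>R\<close> and \<open>R \<bowtie> I\<close>.\<close>

lemma bij_betw_ex1_iff:
  assumes "bij_betw f A B"
  shows "(\<exists>!x. x \<in> A) \<longleftrightarrow> (\<exists>!y. y \<in> B)"
proof -
  have "(\<exists>!x. x \<in> A) \<longleftrightarrow> card A = Suc 0" "(\<exists>!y. y \<in> B) \<longleftrightarrow> card B = Suc 0"
    unfolding card_1_singleton_iff by blast+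
  with bij_betw_same_card[OF assms] show ?thesis
    by simp
qed

lemma (in primeideal) subset_or_subset_if_mult_zero:
  assumes "A \<subseteq> carrier R" "B \<subseteq> carrier R" and "\<And>a b. a \<in> A \<Longrightarrow> b \<in> B \<Longrightarrow> a \<otimes> b = \<zero>"
  shows "A \<subseteq> I \<or> B \<subseteq> I"
proof (rule ccontr)
  assume "\<not> (A \<subseteq> I \<or> B \<subseteq> I)"
  then obtain a b where "a \<in> A" "a \<notin> I" "b \<in> B" "b \<notin> I" by blast
  moreover have "a \<otimes> b \<in> I"
    using assms(3) \<open>a \<in> A\<close> \<open>b \<in> B\<close> by simp
  ultimately show False
    using I_prime assms(1,2) by blast
qed

lemma pm_ringI:
  "(\<And>P. primeideal P R \<Longrightarrow> \<exists>!M. maximalideal M R \<and> P \<subseteq> M) \<Longrightarrow> pm_ring R"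
  unfolding pm_ring_def by blast

lemma pm_ringD:
  "pm_ring R \<Longrightarrow> primeideal P R \<Longrightarrow> \<exists>!M. maximalideal M R \<and> P \<subseteq> M"
  unfolding pm_ring_def by blast

subsection \<open>Ideals along a surjective homomorphism\<close>

locale ring_hom_cring_surj = ring_hom_cring +
  assumes surj: "h ` carrier R = carrier S"
begin

abbreviation preimage :: "'c set \<Rightarrow> 'a set" where
  "preimage J \<equiv> {r \<in> carrier R. h r \<in> J}"

lemma preimage_carrier: "preimage (carrier S) = carrier R"
  by auto

lemma kernel_subset_preimage:
  assumes "ideal J S"
  shows "a_kernel R S h \<subseteq> preimage J"
proof -
  have "\<zero>\<^bsub>S\<^esub> \<in> J"
    using additive_subgroup.zero_closed[OF ideal.axioms(1)[OF assms]] .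
  then show ?thesis
    unfolding a_kernel_def' by auto
qed

lemma image_preimage:
  assumes "J \<subseteq> carrier S"
  shows "h ` preimage J = J"
proof
  show "J \<subseteq> h ` preimage J"
  proof
    fix y assume "y \<in> J"
    then obtain x where "x \<in> carrier R" "y = h x"
      using assms surj by (metis imageE subsetD)
    then show "y \<in> h ` preimage J"
      using \<open>y \<in> J\<close> by auto
  qed
qed auto

lemma ideal_image:
  assumes "ideal K R"
  shows "ideal (h ` K) S"
proof (rule idealI)
  interpret K: ideal K R by fact
  show "subgroup (h ` K) (add_monoid S)"
    by (rule ring.img_is_add_subgroup[OF K.a_subgroup])
  fix a x assume a: "a \<in> h ` K" and x: "x \<in> carrier S"
  obtain k where k: "k \<in> K" "a = h k"
    using a by blast
  obtain y where y: "y \<in> carrier R" "x = h y"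
    using x surj by (metis imageE)
  have "k \<in> carrier R"
    using k(1) K.Icarr by blast
  then have "x \<otimes>\<^bsub>S\<^esub> a = h (y \<otimes> k)" "a \<otimes>\<^bsub>S\<^esub> x = h (k \<otimes> y)"
    using k y by simp_all
  moreover have "y \<otimes> k \<in> K" "k \<otimes> y \<in> K"
    using K.I_l_closed K.I_r_closed k(1) y(1) by auto
  ultimately show "x \<otimes>\<^bsub>S\<^esub> a \<in> h ` K" "a \<otimes>\<^bsub>S\<^esub> x \<in> h ` K"
    by simp_all
qed (rule S.ring_axioms)

lemma preimage_image:
  assumes "ideal K R" and "a_kernel R S h \<subseteq> K"
  shows "preimage (h ` K) = K"
proof
  interpret K: ideal K R by fact
  show "K \<subseteq> preimage (h ` K)"
    using K.Icarr by blast
  show "preimage (h ` K) \<subseteq> K"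
  proof
    fix r assume "r \<in> preimage (h ` K)"
    then obtain k where r: "r \<in> carrier R" and k: "k \<in> K" "h r = h k"
      by blast
    then have kc: "k \<in> carrier R"
      using K.Icarr by blast
    then have "h (r \<ominus> k) = \<zero>\<^bsub>S\<^esub>"
      using r k by (simp add: R.minus_eq S.r_neg)
    then have "r \<ominus> k \<in> K"
      using assms(2) r kc unfolding a_kernel_def' by auto
    then have "(r \<ominus> k) \<oplus> k \<in> K"
      using k(1) K.a_closed by blast
    moreover have "(r \<ominus> k) \<oplus> k = r"
      using r kc by algebra
    ultimately show "r \<in> K"
      by simp
  qed
qed

lemma maximalideal_preimage:
  assumes "maximalideal J S"
  shows "maximalideal (preimage J) R"
proof -
  interpret J: maximalideal J S by fact
  have J_sub: "J \<subseteq> carrier S"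
    using J.Icarr by blast
  show ?thesis
  proof (rule maximalidealI)
    show "ideal (preimage J) R"
      by (rule ring.ideal_vimage[OF J.is_ideal])
    show "carrier R \<noteq> preimage J"
      using image_preimage[OF J_sub] surj J.I_notcarr by metis
    fix K assume K: "ideal K R" "preimage J \<subseteq> K" "K \<subseteq> carrier R"
    have kernel_K: "a_kernel R S h \<subseteq> K"
      using kernel_subset_preimage[OF J.is_ideal] K(2) by blast
    have "J \<subseteq> h ` K"
      using image_preimage[OF J_sub] K(2) by blast
    then have "h ` K = J \<or> h ` K = carrier S"
      using J.I_maximal[OF ideal_image[OF K(1)]] K(3) surj by blast
    then show "K = preimage J \<or> K = carrier R"
      using preimage_image[OF K(1) kernel_K] preimage_carrier by metis
  qed
qed

lemma image_ne_carrier: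
  assumes "ideal K R" "a_kernel R S h \<subseteq> K" "K \<noteq> carrier R"
  shows "h ` K \<noteq> carrier S"
  using preimage_image[OF assms(1,2)] preimage_carrier assms(3) by metis

lemma maximalideal_image:
  assumes "maximalideal K R" and "a_kernel R S h \<subseteq> K"
  shows "maximalideal (h ` K) S"
proof -
  interpret K: maximalideal K R by fact
  show ?thesis
  proof (rule maximalidealI)
    show "ideal (h ` K) S"
      by (rule ideal_image[OF K.is_ideal])
    show "carrier S \<noteq> h ` K"
      using image_ne_carrier[OF K.is_ideal assms(2)] K.I_notcarr by metis
    fix J assume J: "ideal J S" "h ` K \<subseteq> J" "J \<subseteq> carrier S"
    have "K \<subseteq> preimage J"
      using J(2) K.Icarr by blast
    then have "preimage J = K \<or> preimage J = carrier R"
      using K.I_maximal[OF ring.ideal_vimage[OF J(1)]] by blast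
    then show "J = h ` K \<or> J = carrier S"
      using image_preimage[OF J(3)] surj by metis
  qed
qed

lemma primeideal_image:
  assumes "primeideal K R" and "a_kernel R S h \<subseteq> K"
  shows "primeideal (h ` K) S"
proof -
  interpret K: primeideal K R by fact
  show ?thesis
  proof (rule primeidealI)
    show "ideal (h ` K) S"
      by (rule ideal_image[OF K.is_ideal])
    show "cring S"
      by (rule S.is_cring)
    show "carrier S \<noteq> h ` K"
      using image_ne_carrier[OF K.is_ideal assms(2)] K.I_notcarr by metis
    fix a b assume ab: "a \<in> carrier S" "b \<in> carrier S" "a \<otimes>\<^bsub>S\<^esub> b \<in> h ` K"
    obtain x y where xy: "x \<in> carrier R" "a = h x" "y \<in> carrier R" "b = h y"
      using surj ab(1,2) by (metis imageE)
    then have "h (x \<otimes> y) \<in> h ` K"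
      using ab(3) by simp
    then have "x \<otimes> y \<in> K"
      using preimage_image[OF K.is_ideal assms(2)] xy by blast
    then show "a \<in> h ` K \<or> b \<in> h ` K"
      using K.I_prime xy by blast
  qed
qed

lemma bij_betw_maximal_ideals_above:
  assumes "ideal Q R" and "a_kernel R S h \<subseteq> Q"
  shows "bij_betw (image h) {M. maximalideal M R \<and> Q \<subseteq> M} {N. maximalideal N S \<and> h ` Q \<subseteq> N}"
proof (rule bij_betw_byWitness[where f' = preimage])
  have kernel_M: "a_kernel R S h \<subseteq> M" if "Q \<subseteq> M" for M
    using assms(2) that by blast
  show "\<forall>M \<in> {M. maximalideal M R \<and> Q \<subseteq> M}. preimage (h ` M) = M"
    using preimage_image[OF maximalideal.axioms(1) kernel_M] by blast
  show "image h ` {M. maximalideal M R \<and> Q \<subseteq> M} \<subseteq> {N. maximalideal N S \<and> h ` Q \<subseteq> N}"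
    using maximalideal_image[OF _ kernel_M] by blast
  have N_sub: "N \<subseteq> carrier S" if "maximalideal N S" for N
    using ideal.Icarr[OF maximalideal.axioms(1)[OF that]] by blast
  show "\<forall>N \<in> {N. maximalideal N S \<and> h ` Q \<subseteq> N}. h ` preimage N = N"
    using image_preimage[OF N_sub] by blast
  have "Q \<subseteq> preimage N" if "h ` Q \<subseteq> N" for N
    using that ideal.Icarr[OF assms(1)] by blast
  then show "preimage ` {N. maximalideal N S \<and> h ` Q \<subseteq> N} \<subseteq> {M. maximalideal M R \<and> Q \<subseteq> M}"
    using maximalideal_preimage by blast
qed

lemma ex1_maximal_above_iff:
  assumes "ideal Q R" and "a_kernel R S h \<subseteq> Q"
  shows "(\<exists>!M. maximalideal M R \<and> Q \<subseteq> M) \<longleftrightarrow> (\<exists>!N. maximalideal N S \<and> h ` Q \<subseteq> N)"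
  using bij_betw_ex1_iff[OF bij_betw_maximal_ideals_above[OF assms]] by simp

lemma pm_ring_image:
  assumes "pm_ring R"
  shows "pm_ring S"
proof (rule pm_ringI)
  fix P assume P: "primeideal P S"
  then have P_ideal: "ideal P S"
    by (rule primeideal.axioms(1))
  have "primeideal (preimage P) R"
    by (rule ring.primeideal_vimage[OF R.is_cring P])
  then have "\<exists>!M. maximalideal M R \<and> preimage P \<subseteq> M"
    by (rule pm_ringD[OF assms])
  moreover have "h ` preimage P = P"
    using image_preimage ideal.Icarr[OF P_ideal] by blast
  ultimately show "\<exists>!N. maximalideal N S \<and> P \<subseteq> N"
    using ex1_maximal_above_iff[OF ring.ideal_vimage[OF P_ideal] kernel_subset_preimage[OF P_ideal]]
    by simp
qed

lemma ex1_maximal_above_if_target_pm_ring: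
  assumes "pm_ring S" and "primeideal Q R" and "a_kernel R S h \<subseteq> Q"
  shows "\<exists>!M. maximalideal M R \<and> Q \<subseteq> M"
proof -
  have "\<exists>!N. maximalideal N S \<and> h ` Q \<subseteq> N"
    by (rule pm_ringD[OF assms(1) primeideal_image[OF assms(2,3)]])
  then show ?thesis
    using ex1_maximal_above_iff[OF primeideal.axioms(1)[OF assms(2)] assms(3)] by simp
qed

end

subsection \<open>The amalgamated duplication\<close>

lemma RDirProd_mult [simp]: "(a, b) \<otimes>\<^bsub>RDirProd R S\<^esub> (c, d) = (a \<otimes>\<^bsub>R\<^esub> c, b \<otimes>\<^bsub>S\<^esub> d)"
  by (simp add: RDirProd_def DirProd_def monoid.defs)

lemma RDirProd_add [simp]: "(a, b) \<oplus>\<^bsub>RDirProd R S\<^esub> (c, d) = (a \<oplus>\<^bsub>R\<^esub> c, b \<oplus>\<^bsub>S\<^esub> d)"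
  by (simp add: RDirProd_def DirProd_def monoid.defs)

lemma RDirProd_one [simp]: "\<one>\<^bsub>RDirProd R S\<^esub> = (\<one>\<^bsub>R\<^esub>, \<one>\<^bsub>S\<^esub>)"
  by (simp add: RDirProd_def DirProd_def monoid.defs)

lemma RDirProd_zero [simp]: "\<zero>\<^bsub>RDirProd R S\<^esub> = (\<zero>\<^bsub>R\<^esub>, \<zero>\<^bsub>S\<^esub>)"
  by (simp add: RDirProd_def DirProd_def monoid.defs)

lemma RDirProd_a_inv:
  assumes "ring R" "ring S" "a \<in> carrier R" "b \<in> carrier S"
  shows "\<ominus>\<^bsub>RDirProd R S\<^esub> (a, b) = (\<ominus>\<^bsub>R\<^esub> a, \<ominus>\<^bsub>S\<^esub> b)"
proof -
  interpret R: ring R by fact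
  interpret S: ring S by fact
  interpret P: ring "RDirProd R S"
    by (rule RDirProd_ring[OF assms(1,2)])
  show ?thesis
    by (rule P.minus_equality) (use assms in \<open>simp_all add: RDirProd_carrier R.l_neg S.l_neg\<close>)
qed

lemma amalg_dup_carrier:
  "carrier (amalg_dup R I) = {(r, r \<oplus>\<^bsub>R\<^esub> i) | r i. r \<in> carrier R \<and> i \<in> I}"
  by (simp add: amalg_dup_def)

lemma amalg_dup_memI:
  "r \<in> carrier R \<Longrightarrow> i \<in> I \<Longrightarrow> s = r \<oplus>\<^bsub>R\<^esub> i \<Longrightarrow> (r, s) \<in> carrier (amalg_dup R I)"
  unfolding amalg_dup_carrier by blast

lemma amalg_dup_memE:
  assumes "x \<in> carrier (amalg_dup R I)"
  obtains r i where "x = (r, r \<oplus>\<^bsub>R\<^esub> i)" "r \<in> carrier R" "i \<in> I"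
  using assms unfolding amalg_dup_carrier by blast

lemma amalg_dup_carrier_subset:
  "ideal I R \<Longrightarrow> carrier (amalg_dup R I) \<subseteq> carrier R \<times> carrier R"
  unfolding amalg_dup_carrier using ideal.Icarr ring.ring_simprules(1) ideal.axioms(2) by fastforce

lemma amalg_dup_mult [simp]:
  "(a, b) \<otimes>\<^bsub>amalg_dup R I\<^esub> (c, d) = (a \<otimes>\<^bsub>R\<^esub> c, b \<otimes>\<^bsub>R\<^esub> d)"
  by (simp add: amalg_dup_def)

lemma amalg_dup_add [simp]:
  "(a, b) \<oplus>\<^bsub>amalg_dup R I\<^esub> (c, d) = (a \<oplus>\<^bsub>R\<^esub> c, b \<oplus>\<^bsub>R\<^esub> d)"
  by (simp add: amalg_dup_def)

lemma amalg_dup_one [simp]: "\<one>\<^bsub>amalg_dup R I\<^esub> = (\<one>\<^bsub>R\<^esub>, \<one>\<^bsub>R\<^esub>)"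
  by (simp add: amalg_dup_def)

lemma amalg_dup_zero [simp]: "\<zero>\<^bsub>amalg_dup R I\<^esub> = (\<zero>\<^bsub>R\<^esub>, \<zero>\<^bsub>R\<^esub>)"
  by (simp add: amalg_dup_def)

lemma subcring_amalg_dup:
  assumes "cring R" and "ideal I R"
  shows "subcring (carrier (amalg_dup R I)) (RDirProd R R)"
proof -
  interpret R: cring R by fact
  interpret I: ideal I R by fact
  interpret P: ring "RDirProd R R"
    by (rule RDirProd_ring[OF R.ring_axioms R.ring_axioms])
  have sub: "carrier (amalg_dup R I) \<subseteq> carrier (RDirProd R R)"
    using amalg_dup_carrier_subset[OF assms(2)] by (simp add: RDirProd_carrier)
  show ?thesis
  proof (rule P.subcringI[OF P.subringI[OF sub]])
    show "\<one>\<^bsub>RDirProd R R\<^esub> \<in> carrier (amalg_dup R I)"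
      by (simp add: amalg_dup_memI[OF R.one_closed I.zero_closed])
  next
    fix x assume "x \<in> carrier (amalg_dup R I)"
    then obtain r i where x: "x = (r, r \<oplus>\<^bsub>R\<^esub> i)" "r \<in> carrier R" "i \<in> I"
      by (rule amalg_dup_memE)
    then have "\<ominus>\<^bsub>RDirProd R R\<^esub> x = (\<ominus>\<^bsub>R\<^esub> r, \<ominus>\<^bsub>R\<^esub> r \<oplus>\<^bsub>R\<^esub> \<ominus>\<^bsub>R\<^esub> i)"
      using RDirProd_a_inv[OF R.ring_axioms R.ring_axioms] R.minus_add I.Icarr by simp
    then show "\<ominus>\<^bsub>RDirProd R R\<^esub> x \<in> carrier (amalg_dup R I)"
      using amalg_dup_memI[OF R.a_inv_closed[OF x(2)] I.a_inv_closed[OF x(3)] refl] by simp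
  next
    fix x y assume "x \<in> carrier (amalg_dup R I)" "y \<in> carrier (amalg_dup R I)"
    then obtain r i s j where x: "x = (r, r \<oplus>\<^bsub>R\<^esub> i)" "r \<in> carrier R" "i \<in> I"
      and y: "y = (s, s \<oplus>\<^bsub>R\<^esub> j)" "s \<in> carrier R" "j \<in> I"
      by (metis amalg_dup_memE)
    have ij: "i \<in> carrier R" "j \<in> carrier R"
      using x(3) y(3) I.Icarr by auto
    have "(r \<oplus>\<^bsub>R\<^esub> i) \<otimes>\<^bsub>R\<^esub> (s \<oplus>\<^bsub>R\<^esub> j) = r \<otimes>\<^bsub>R\<^esub> s \<oplus>\<^bsub>R\<^esub> (r \<otimes>\<^bsub>R\<^esub> j \<oplus>\<^bsub>R\<^esub> i \<otimes>\<^bsub>R\<^esub> (s \<oplus>\<^bsub>R\<^esub> j))"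
      using x(2) y(2) ij by algebra
    moreover have "r \<otimes>\<^bsub>R\<^esub> j \<oplus>\<^bsub>R\<^esub> i \<otimes>\<^bsub>R\<^esub> (s \<oplus>\<^bsub>R\<^esub> j) \<in> I"
      using x(2,3) y(2,3) ij by (simp add: I.I_l_closed I.I_r_closed I.a_closed)
    ultimately show "x \<otimes>\<^bsub>RDirProd R R\<^esub> y \<in> carrier (amalg_dup R I)"
      using x(1,2) y(1,2) by (simp add: amalg_dup_memI)
    have "(r \<oplus>\<^bsub>R\<^esub> i) \<oplus>\<^bsub>R\<^esub> (s \<oplus>\<^bsub>R\<^esub> j) = (r \<oplus>\<^bsub>R\<^esub> s) \<oplus>\<^bsub>R\<^esub> (i \<oplus>\<^bsub>R\<^esub> j)"
      using x(2) y(2) ij by algebra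
    then show "x \<oplus>\<^bsub>RDirProd R R\<^esub> y \<in> carrier (amalg_dup R I)"
      using x(1) y(1) amalg_dup_memI[OF R.a_closed[OF x(2) y(2)] I.a_closed[OF x(3) y(3)] refl] by simp
    show "x \<otimes>\<^bsub>RDirProd R R\<^esub> y = y \<otimes>\<^bsub>RDirProd R R\<^esub> x"
      using x y ij by (simp add: R.m_comm)
  qed
qed

lemma cring_amalg_dup:
  assumes "cring R" and "ideal I R"
  shows "cring (amalg_dup R I)"
proof -
  interpret P: ring "RDirProd R R"
    using RDirProd_ring cring.axioms(1)[OF assms(1)] by blast
  have "carrier (amalg_dup R I) \<subseteq> carrier (RDirProd R R)"
    using amalg_dup_carrier_subset[OF assms(2)] by (simp add: RDirProd_carrier)
  then show ?thesis
    using P.subcring_iff subcring_amalg_dup[OF assms] by (simp add: amalg_dup_def)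
qed

lemma ring_hom_cring_surj_amalg_dup_fst:
  assumes "cring R" and "ideal I R"
  shows "ring_hom_cring_surj (amalg_dup R I) R fst"
proof (intro ring_hom_cring_surj.intro ring_hom_cring.intro ring_hom_cring_axioms.intro
    ring_hom_cring_surj_axioms.intro cring_amalg_dup assms ring_hom_memI)
  interpret R: cring R by fact
  interpret I: ideal I R by fact
  have sub: "carrier (amalg_dup R I) \<subseteq> carrier R \<times> carrier R"
    by (rule amalg_dup_carrier_subset[OF assms(2)])
  show "fst x \<in> carrier R" if "x \<in> carrier (amalg_dup R I)" for x
    using sub that by auto
  show "fst (x \<otimes>\<^bsub>amalg_dup R I\<^esub> y) = fst x \<otimes>\<^bsub>R\<^esub> fst y"
    and "fst (x \<oplus>\<^bsub>amalg_dup R I\<^esub> y) = fst x \<oplus>\<^bsub>R\<^esub> fst y" for x y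
    by (cases x; cases y; simp)+
  show "fst \<one>\<^bsub>amalg_dup R I\<^esub> = \<one>\<^bsub>R\<^esub>"
    by simp
  have "r \<in> fst ` carrier (amalg_dup R I)" if "r \<in> carrier R" for r
    using amalg_dup_memI[OF that I.zero_closed refl] by force
  then show "fst ` carrier (amalg_dup R I) = carrier R"
    using sub by auto
qed

lemma ring_hom_cring_surj_amalg_dup_snd:
  assumes "cring R" and "ideal I R"
  shows "ring_hom_cring_surj (amalg_dup R I) R snd"
proof (intro ring_hom_cring_surj.intro ring_hom_cring.intro ring_hom_cring_axioms.intro
    ring_hom_cring_surj_axioms.intro cring_amalg_dup assms ring_hom_memI)
  interpret R: cring R by fact
  interpret I: ideal I R by fact
  have sub: "carrier (amalg_dup R I) \<subseteq> carrier R \<times> carrier R"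
    by (rule amalg_dup_carrier_subset[OF assms(2)])
  show "snd x \<in> carrier R" if "x \<in> carrier (amalg_dup R I)" for x
    using sub that by auto
  show "snd (x \<otimes>\<^bsub>amalg_dup R I\<^esub> y) = snd x \<otimes>\<^bsub>R\<^esub> snd y"
    and "snd (x \<oplus>\<^bsub>amalg_dup R I\<^esub> y) = snd x \<oplus>\<^bsub>R\<^esub> snd y" for x y
    by (cases x; cases y; simp)+
  show "snd \<one>\<^bsub>amalg_dup R I\<^esub> = \<one>\<^bsub>R\<^esub>"
    by simp
  have "r \<in> snd ` carrier (amalg_dup R I)" if "r \<in> carrier R" for r
    using amalg_dup_memI[OF that I.zero_closed refl] that by force
  then show "snd ` carrier (amalg_dup R I) = carrier R"
    using sub by auto
qed

lemma amalg_dup_kernels_mult_zero: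
  assumes "ideal I R"
    and "x \<in> a_kernel (amalg_dup R I) R fst" and "y \<in> a_kernel (amalg_dup R I) R snd"
  shows "x \<otimes>\<^bsub>amalg_dup R I\<^esub> y = \<zero>\<^bsub>amalg_dup R I\<^esub>"
proof -
  interpret R: ring R
    by (rule ideal.axioms(2)[OF assms(1)])
  have x: "x \<in> carrier (amalg_dup R I)" "fst x = \<zero>\<^bsub>R\<^esub>"
    and y: "y \<in> carrier (amalg_dup R I)" "snd y = \<zero>\<^bsub>R\<^esub>"
    using assms(2,3) unfolding a_kernel_def' by simp_all
  then have "snd x \<in> carrier R" "fst y \<in> carrier R"
    using amalg_dup_carrier_subset[OF assms(1)] by auto
  then show ?thesis
    using x(2) y(2) by (cases x; cases y) simp
qed

theorem corollary3p5:
  fixes R :: "('a, 'm) ring_scheme" and I :: "'a set"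
  assumes "cring R" and "ideal I R"
  shows "pm_ring (amalg_dup R I) \<longleftrightarrow> pm_ring R"
proof
  interpret fst: ring_hom_cring_surj "amalg_dup R I" R fst
    by (rule ring_hom_cring_surj_amalg_dup_fst[OF assms])
  interpret snd: ring_hom_cring_surj "amalg_dup R I" R snd
    by (rule ring_hom_cring_surj_amalg_dup_snd[OF assms])
  show "pm_ring (amalg_dup R I) \<Longrightarrow> pm_ring R"
    by (rule fst.pm_ring_image)
  assume pm: "pm_ring R"
  show "pm_ring (amalg_dup R I)"
  proof (rule pm_ringI)
    fix Q assume Q: "primeideal Q (amalg_dup R I)"
    have kernel_sub: "a_kernel (amalg_dup R I) R h \<subseteq> carrier (amalg_dup R I)" for h
      unfolding a_kernel_def' by blast
    have "a_kernel (amalg_dup R I) R fst \<subseteq> Q \<or> a_kernel (amalg_dup R I) R snd \<subseteq> Q"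
      by (rule primeideal.subset_or_subset_if_mult_zero[OF Q kernel_sub kernel_sub
            amalg_dup_kernels_mult_zero[OF assms(2)]])
    then show "\<exists>!M. maximalideal M (amalg_dup R I) \<and> Q \<subseteq> M"
    proof
      assume "a_kernel (amalg_dup R I) R fst \<subseteq> Q"
      then show ?thesis
        by (rule fst.ex1_maximal_above_if_target_pm_ring[OF pm Q])
    next
      assume "a_kernel (amalg_dup R I) R snd \<subseteq> Q"
      then show ?thesis
        by (rule snd.ex1_maximal_above_if_target_pm_ring[OF pm Q])
    qed
  qed
qed

end
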